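(* Let $\sigma=\sigma^0\sigma^1\sigma^2\in\{+,-\}^3$ and let $\sigma_r=\sigma^2\sigma^1\sigma^0$ be its reverse. For every integer $n\geq 1$, $L_3^*(n;\sigma)=L_3^*(n;\sigma_r)$.
   Context: A word of length $m$ on $k$ letters is $s=s_1\cdots s_m$ with $s_j\in\{0,\dots,k-1\}$; primitive means not of the form $q^r$ (concatenation of $r$ copies of $q$) with $r>1$. Necklaces are equivalence classes of words under cyclic rotation, primitive if their representatives are. $L_k(m)$ is the number of primitive necklaces of length $m$ on $k$ letters. For $\sigma\in\{+,-\}^k$ let $T_\sigma^-=\{i:\sigma^i=-\}$ and $o_\sigma(s)=|\{j:s_j\in T_\sigma^-\}|$. $L_k(m;\sigma)$ is the number of primitive necklaces of length $m$ on $k$ letters whose representatives $s$ have $o_\sigma(s)$ odd, with $L_k(m;\sigma)=0$ if $m$ is not an integer, and $L_k^*(n;\sigma)=L_k(n)+L_k(\tfrac n2;\sigma)$. *)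

theory Defs
  imports Main
begin

datatype sign = Plus | Minus

definition words :: "nat \<Rightarrow> nat \<Rightarrow> nat list set" where
  "words k m = {s. length s = m \<and> set s \<subseteq> {0..<k}}"

definition primitive :: "nat list \<Rightarrow> bool" where
  "primitive s \<longleftrightarrow> \<not> (\<exists>q r. r > 1 \<and> s = concat (replicate r q))"

definition necklace :: "nat list \<Rightarrow> nat list set" where
  "necklace s = {rotate i s | i. True}"

definition prim_necklaces :: "nat \<Rightarrow> nat \<Rightarrow> nat list set set" where
  "prim_necklaces k m = necklace ` {s \<in> words k m. primitive s}"

definition L :: "nat \<Rightarrow> nat \<Rightarrow> nat" where
  "L k m = card (prim_necklaces k m)"

definition o_sig :: "sign list \<Rightarrow> nat list \<Rightarrow> nat" where
  "o_sig \<sigma> s = length (filter (\<lambda>c. \<sigma> ! c = Minus) s)"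

definition L_sig :: "nat \<Rightarrow> nat \<Rightarrow> sign list \<Rightarrow> nat" where
  "L_sig k m \<sigma> = card {N \<in> prim_necklaces k m. \<forall>s\<in>N. odd (o_sig \<sigma> s)}"

definition L_star :: "nat \<Rightarrow> nat \<Rightarrow> sign list \<Rightarrow> nat" where
  "L_star k n \<sigma> = L k n + (if even n then L_sig k (n div 2) \<sigma> else 0)"

end

theory Submission
  imports Defs
begin

text \<open>Reflecting the alphabet, \<open>c \<mapsto> k - 1 - c\<close>, commutes with rotation, preserves
  primitivity, and turns \<open>o\<^sub>\<sigma>\<close> into \<open>o\<^sub>\<sigma>\<^sub>r\<close>; hence it maps the primitive necklaces
  counted by \<open>L\<^sub>k(m;\<sigma>)\<close> bijectively onto those counted by \<open>L\<^sub>k(m;\<sigma>\<^sub>r)\<close>. The term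
  \<open>L\<^sub>k(n)\<close> does not depend on \<open>\<sigma>\<close> at all.\<close>

definition reflect_word :: "nat \<Rightarrow> nat list \<Rightarrow> nat list" where
  "reflect_word k s = map (\<lambda>c. k - 1 - c) s"

lemma reflect_word_involutive:
  "set s \<subseteq> {0..<k} \<Longrightarrow> reflect_word k (reflect_word k s) = s"
  unfolding reflect_word_def by (induction s) auto

lemma reflect_word_in_words: "s \<in> words k m \<Longrightarrow> reflect_word k s \<in> words k m"
  unfolding words_def reflect_word_def by auto

lemma rotate_reflect_word: "rotate i (reflect_word k s) = reflect_word k (rotate i s)"
  unfolding reflect_word_def by (simp add: rotate_map)

lemma necklace_reflect_word: "necklace (reflect_word k s) = reflect_word k ` necklace s"
  unfolding necklace_def by (auto simp: rotate_reflect_word)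

lemma primitive_map_inj_on:
  assumes "inj_on f (set s)" "primitive s"
  shows "primitive (map f s)"
  unfolding primitive_def
proof
  assume "\<exists>q r. r > 1 \<and> map f s = concat (replicate r q)"
  then obtain q r where "r > 1" "map f s = concat (replicate r q)" by blast
  have "s = map (inv_into (set s) f) (map f s)"
    using assms(1) by (simp add: map_idI)
  then have "s = concat (replicate r (map (inv_into (set s) f) q))"
    by (simp add: \<open>map f s = _\<close> map_concat)
  with \<open>r > 1\<close> assms(2) show False unfolding primitive_def by blast
qed

lemma primitive_reflect_word:
  assumes "set s \<subseteq> {0..<k}" "primitive s"
  shows "primitive (reflect_word k s)"
  unfolding reflect_word_def
proof (rule primitive_map_inj_on[OF _ assms(2)])
  show "inj_on (\<lambda>c. k - 1 - c) (set s)"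
  proof (rule inj_onI)
    fix x y assume "x \<in> set s" "y \<in> set s" "k - 1 - x = k - 1 - y"
    moreover have "x < k" "y < k" using assms(1) calculation by auto
    ultimately show "x = y" by linarith
  qed
qed

lemma o_sig_rev_reflect_word:
  assumes "length \<sigma> = k" "set s \<subseteq> {0..<k}"
  shows "o_sig (rev \<sigma>) (reflect_word k s) = o_sig \<sigma> s"
proof -
  have "rev \<sigma> ! (k - 1 - c) = \<sigma> ! c" if "c \<in> set s" for c
    using that assms by (auto simp: rev_nth)
  then have "filter ((\<lambda>c. rev \<sigma> ! c = Minus) \<circ> (\<lambda>c. k - 1 - c)) s
           = filter (\<lambda>c. \<sigma> ! c = Minus) s"
    by (intro filter_cong) auto
  then show ?thesis unfolding o_sig_def reflect_word_def filter_map length_map by (rule arg_cong)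
qed

definition odd_prim_necklaces :: "nat \<Rightarrow> nat \<Rightarrow> sign list \<Rightarrow> nat list set set" where
  "odd_prim_necklaces k m \<sigma> = {N \<in> prim_necklaces k m. \<forall>s\<in>N. odd (o_sig \<sigma> s)}"

lemma L_sig_eq_card_odd_prim_necklaces: "L_sig k m \<sigma> = card (odd_prim_necklaces k m \<sigma>)"
  unfolding L_sig_def odd_prim_necklaces_def ..

lemma reflect_odd_prim_necklace:
  assumes "length \<sigma> = k" "N \<in> odd_prim_necklaces k m \<sigma>"
  shows "reflect_word k ` N \<in> odd_prim_necklaces k m (rev \<sigma>)"
    and "reflect_word k ` reflect_word k ` N = N"
proof -
  obtain s where s: "s \<in> words k m" "primitive s" "N = necklace s"
    using assms(2) unfolding odd_prim_necklaces_def prim_necklaces_def by auto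
  have letters: "set t \<subseteq> {0..<k}" if "t \<in> N" for t
    using that s(1,3) unfolding necklace_def words_def by auto
  have "reflect_word k ` N = necklace (reflect_word k s)"
    using s(3) by (simp add: necklace_reflect_word)
  moreover have "reflect_word k s \<in> words k m" "primitive (reflect_word k s)"
    using s reflect_word_in_words primitive_reflect_word by (auto simp: words_def)
  moreover have "\<forall>t\<in>reflect_word k ` N. odd (o_sig (rev \<sigma>) t)"
    using assms o_sig_rev_reflect_word letters unfolding odd_prim_necklaces_def by auto
  ultimately show "reflect_word k ` N \<in> odd_prim_necklaces k m (rev \<sigma>)"
    unfolding odd_prim_necklaces_def prim_necklaces_def by blast
  have "reflect_word k ` reflect_word k ` N = (\<lambda>t. reflect_word k (reflect_word k t)) ` N"
    by (simp add: image_image)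
  also have "\<dots> = N"
    using letters reflect_word_involutive by (simp cong: image_cong)
  finally show "reflect_word k ` reflect_word k ` N = N" .
qed

lemma L_sig_rev:
  assumes "length \<sigma> = k"
  shows "L_sig k m \<sigma> = L_sig k m (rev \<sigma>)"
proof -
  have "length (rev \<sigma>) = k" using assms by simp
  then have "bij_betw (image (reflect_word k))
      (odd_prim_necklaces k m \<sigma>) (odd_prim_necklaces k m (rev \<sigma>))"
    using reflect_odd_prim_necklace[OF assms] reflect_odd_prim_necklace[of "rev \<sigma>"]
    by (intro bij_betw_byWitness[where f' = "image (reflect_word k)"]) auto
  then show ?thesis
    unfolding L_sig_eq_card_odd_prim_necklaces by (rule bij_betw_same_card)
qed

theorem lemma2p3:
  fixes \<sigma> :: "sign list" and n :: nat
  assumes "length \<sigma> = 3" and "n \<ge> 1"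
  shows "L_star 3 n \<sigma> = L_star 3 n (rev \<sigma>)"
  unfolding L_star_def using L_sig_rev[OF assms(1)] by simp

end
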